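(* Let $m\ge 2$ and let $X(0),X(1),\dots$ be i.i.d. random vectors in $\mathbb{R}^m$ (on a common probability space) whose components satisfy $X_{\min,i}\le X_i(k)\le X_{\max,i}$ almost surely, where $X_{\max,i}<\infty$ and $X_{\min,i}>-1$, and where at least one component equals a constant $r\ge 0$ almost surely. For $n\ge 1$ let $\mathcal{X}_{n,i}:=\prod_{k=0}^{n-1}(1+X_i(k))-1$, $\mathcal{X}_n=(\mathcal{X}_{n,1},\dots,\mathcal{X}_{n,m})^T$, $\mathcal{K}:=\{K\in\mathbb{R}^m: K_i\ge 0,\ \sum_i K_i=1\}$, and for each $n$ let $K^*_n\in\mathcal{K}$ maximize $g_n(K):=\frac{1}{n}\mathbb{E}[\log(1+K^T\mathcal{X}_n)]$ over $\mathcal{K}$. Then for every $K\in\mathcal{K}$, $$\limsup_{n\to\infty}\frac{1}{n}\log\frac{1+K^T\mathcal{X}_n}{1+{K_n^*}^T\mathcal{X}_n}\le 0\quad\text{almost surely.}$$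
   Context: $X_i(k)$ is the return of asset $i$ at step $k$; components may be arbitrarily correlated; $n$ is the rebalancing period and $K_n^*$ a Kelly optimal feedback gain for that period. *)

theory Defs
  imports "HOL-Probability.Probability"
begin

definition portfolios :: "(real ^ 'm) set" where
  "portfolios = {K. (\<forall>i. K $ i \<ge> 0) \<and> (\<Sum>i\<in>UNIV. K $ i) = 1}"

definition cumret :: "(nat \<Rightarrow> 'a \<Rightarrow> real ^ 'm) \<Rightarrow> nat \<Rightarrow> 'a \<Rightarrow> real ^ 'm" where
  "cumret X n \<omega> = (\<chi> i. (\<Prod>k<n. 1 + X k \<omega> $ i) - 1)"

definition growth :: "'a measure \<Rightarrow> (nat \<Rightarrow> 'a \<Rightarrow> real ^ 'm) \<Rightarrow> nat \<Rightarrow> real ^ 'm \<Rightarrow> real" where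
  "growth M X n K = (1 / real n) * (\<integral>\<omega>. ln (1 + K \<bullet> cumret X n \<omega>) \<partial>M)"

end

theory Submission
  imports Defs
begin

text \<open>
  Log-optimality of \<open>K\<^sup>*\<^sub>n\<close> against the mixtures \<open>(1 - t) K\<^sup>*\<^sub>n + t K\<close> gives, by a
  first-order expansion at \<open>t = 0\<close> (uniform because the wealth is bounded away from 0 and \<open>\<infinity>\<close>),
  the Kuhn-Tucker inequality \<open>E[W\<^sub>K / W\<^sub>K\<^sub>*] \<le> 1\<close> for the wealth ratio after \<open>n\<close> steps.
  Markov's inequality then bounds the probability that the ratio exceeds \<open>e\<^sup>n\<^sup>\<epsilon>\<close> by
  \<open>e\<^sup>-\<^sup>n\<^sup>\<epsilon>\<close>, and Borel-Cantelli gives \<open>limsup (1/n) log (W\<^sub>K / W\<^sub>K\<^sub>*) \<le> \<epsilon>\<close> almost surely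
  for every \<open>\<epsilon> > 0\<close>.
\<close>

lemma ln_one_plus_lower_bound:
  fixes u :: real
  assumes "\<bar>u\<bar> \<le> 1/2"
  shows "u - 2 * u^2 \<le> ln (1 + u)"
proof (cases "u \<ge> 0")
  case True
  have "u - u^2 \<le> ln (1 + u)"
    by (rule ln_one_plus_pos_lower_bound) (use True assms in auto)
  then show ?thesis using zero_le_power2[of u] by linarith
next
  case False
  have "-(-u) - 2 * (-u)^2 \<le> ln (1 - (-u))"
    by (rule ln_one_minus_pos_lower_bound) (use False assms in auto)
  then show ?thesis by simp
qed

lemma le_zero_if_le_small_multiples:
  fixes x B \<delta> :: real
  assumes "0 < \<delta>" and le: "\<And>t. 0 < t \<Longrightarrow> t \<le> \<delta> \<Longrightarrow> x \<le> t * B"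
  shows "x \<le> 0"
proof (rule field_le_epsilon)
  fix e :: real assume "0 < e"
  define t where "t = min \<delta> (e / (\<bar>B\<bar> + 1))"
  have t: "0 < t" "t \<le> \<delta>" "t \<le> e / (\<bar>B\<bar> + 1)"
    using \<open>0 < \<delta>\<close> \<open>0 < e\<close> by (auto simp: t_def)
  have "x \<le> t * B" using le t by blast
  also have "\<dots> \<le> t * (\<bar>B\<bar> + 1)" using t by (intro mult_left_mono) auto
  also have "\<dots> \<le> e" using t(3) by (simp add: le_divide_eq add_pos_nonneg)
  finally show "x \<le> 0 + e" by simp
qed

lemma ratio_bounds:
  fixes x y c C :: real
  assumes "0 < c" "c \<le> x" "x \<le> C" "c \<le> y" "y \<le> C"
  shows "0 < x / y \<and> x / y \<le> C / c"
  using assms by (auto intro: frac_le)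

lemma ln_mixture_ge:
  fixes x y t D :: real
  assumes "0 < y" "0 \<le> t" "\<bar>x / y - 1\<bar> \<le> D" "t * D \<le> 1/2"
  shows "t * (x / y - 1) - 2 * t^2 * D^2 \<le> ln ((1 - t) * y + t * x) - ln y"
proof -
  define u where "u = t * (x / y - 1)"
  have "\<bar>u\<bar> \<le> t * D"
    unfolding u_def abs_mult using assms by (simp add: mult_left_mono)
  then have u: "\<bar>u\<bar> \<le> 1/2" "u^2 \<le> (t * D)^2"
    using assms(4) by (auto, metis abs_ge_zero power2_abs power_mono)
  have mix: "(1 - t) * y + t * x = y * (1 + u)"
    unfolding u_def using assms by (simp add: field_simps)
  have "1 + u > 0" using u by linarith
  then have "ln ((1 - t) * y + t * x) - ln y = ln (1 + u)"
    unfolding mix using assms by (simp add: ln_mult)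
  moreover have "u - 2 * u^2 \<le> ln (1 + u)" using u(1) by (rule ln_one_plus_lower_bound)
  ultimately show ?thesis using u unfolding u_def by (simp add: power_mult_distrib)
qed

lemma (in finite_measure) integrable_AE_bounded:
  fixes h :: "'a \<Rightarrow> real"
  assumes "h \<in> borel_measurable M" and "AE x in M. lo \<le> h x \<and> h x \<le> hi"
  shows "integrable M h"
  using assms by (intro integrable_const_bound[where B="\<bar>lo\<bar> + \<bar>hi\<bar>"]) auto

lemma (in finite_measure) integrable_ln_AE_bounded:
  fixes h :: "'a \<Rightarrow> real"
  assumes [measurable]: "h \<in> borel_measurable M" and "0 < c" and "AE x in M. c \<le> h x \<and> h x \<le> C"
  shows "integrable M (\<lambda>x. ln (h x))"
proof (rule integrable_AE_bounded[where lo="ln c" and hi="ln C"])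
  show "AE x in M. ln c \<le> ln (h x) \<and> ln (h x) \<le> ln C"
    using assms(3) by eventually_elim (use \<open>0 < c\<close> in auto)
qed measurable

lemma (in finite_measure) integrable_ratio_AE_bounded:
  fixes f g :: "'a \<Rightarrow> real"
  assumes [measurable]: "f \<in> borel_measurable M" "g \<in> borel_measurable M"
    and "0 < c"
    and fb: "AE \<omega> in M. c \<le> f \<omega> \<and> f \<omega> \<le> C"
    and gb: "AE \<omega> in M. c \<le> g \<omega> \<and> g \<omega> \<le> C"
  shows "integrable M (\<lambda>\<omega>. f \<omega> / g \<omega>)"
proof (rule integrable_AE_bounded[where lo=0 and hi="C / c"])
  have "AE \<omega> in M. 0 < f \<omega> / g \<omega> \<and> f \<omega> / g \<omega> \<le> C / c"
    using fb gb by eventually_elim (use \<open>0 < c\<close> ratio_bounds in blast)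
  then show "AE \<omega> in M. 0 \<le> f \<omega> / g \<omega> \<and> f \<omega> / g \<omega> \<le> C / c"
    by eventually_elim simp
qed measurable

lemma (in prob_space) integral_ln_mixture_ge:
  fixes f g :: "'a \<Rightarrow> real"
  assumes [measurable]: "f \<in> borel_measurable M" "g \<in> borel_measurable M"
    and "0 < c"
    and fb: "AE \<omega> in M. c \<le> f \<omega> \<and> f \<omega> \<le> C"
    and gb: "AE \<omega> in M. c \<le> g \<omega> \<and> g \<omega> \<le> C"
    and t: "0 < t" "t \<le> 1" "t * (C / c) \<le> 1/2"
  shows "t * ((\<integral>\<omega>. f \<omega> / g \<omega> \<partial>M) - 1) - 2 * t^2 * (C / c)^2
    \<le> (\<integral>\<omega>. ln ((1 - t) * g \<omega> + t * f \<omega>) \<partial>M) - (\<integral>\<omega>. ln (g \<omega>) \<partial>M)"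
proof -
  let ?h = "\<lambda>\<omega>. (1 - t) * g \<omega> + t * f \<omega>"
  have "AE \<omega> in M. c \<le> C" using fb by eventually_elim auto
  then have "c \<le> C" by simp
  then have "1 \<le> C / c" using \<open>0 < c\<close> by simp
  have ratio: "AE \<omega> in M. 0 < f \<omega> / g \<omega> \<and> f \<omega> / g \<omega> \<le> C / c"
    using fb gb by eventually_elim (use \<open>0 < c\<close> ratio_bounds in blast)
  have hb: "AE \<omega> in M. c \<le> ?h \<omega> \<and> ?h \<omega> \<le> C"
    using fb gb
  proof eventually_elim
    case (elim \<omega>)
    have "(1 - t) * c + t * c \<le> ?h \<omega>" "?h \<omega> \<le> (1 - t) * C + t * C"
      using elim t by (intro add_mono mult_left_mono; simp)+
    then show ?case by (simp add: algebra_simps)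
  qed
  have int_ratio: "integrable M (\<lambda>\<omega>. f \<omega> / g \<omega>)"
    by (rule integrable_ratio_AE_bounded[OF _ _ \<open>0 < c\<close> fb gb]) measurable
  have int_ln: "integrable M (\<lambda>\<omega>. ln (?h \<omega>))" "integrable M (\<lambda>\<omega>. ln (g \<omega>))"
    using hb gb \<open>0 < c\<close> by (auto intro: integrable_ln_AE_bounded)
  have "t * ((\<integral>\<omega>. f \<omega> / g \<omega> \<partial>M) - 1) - 2 * t^2 * (C / c)^2
      = (\<integral>\<omega>. t * (f \<omega> / g \<omega> - 1) - 2 * t^2 * (C / c)^2 \<partial>M)"
    using int_ratio by (simp add: prob_space)
  also have "\<dots> \<le> (\<integral>\<omega>. ln (?h \<omega>) - ln (g \<omega>) \<partial>M)"
  proof (rule integral_mono_AE)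
    show "AE \<omega> in M. t * (f \<omega> / g \<omega> - 1) - 2 * t^2 * (C / c)^2 \<le> ln (?h \<omega>) - ln (g \<omega>)"
      using ratio gb
    proof eventually_elim
      case (elim \<omega>)
      have "\<bar>f \<omega> / g \<omega> - 1\<bar> \<le> C / c" using elim \<open>1 \<le> C / c\<close> by linarith
      then show ?case using elim \<open>0 < c\<close> t by (intro ln_mixture_ge) auto
    qed
  qed (use int_ratio int_ln in auto)
  also have "\<dots> = (\<integral>\<omega>. ln (?h \<omega>) \<partial>M) - (\<integral>\<omega>. ln (g \<omega>) \<partial>M)"
    using int_ln by simp
  finally show ?thesis .
qed

lemma (in prob_space) integral_ratio_le_one_if_log_optimal:
  fixes f g :: "'a \<Rightarrow> real"
  assumes [measurable]: "f \<in> borel_measurable M" "g \<in> borel_measurable M"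
    and "0 < c"
    and fb: "AE \<omega> in M. c \<le> f \<omega> \<and> f \<omega> \<le> C"
    and gb: "AE \<omega> in M. c \<le> g \<omega> \<and> g \<omega> \<le> C"
    and opt: "\<And>t. 0 < t \<Longrightarrow> t \<le> 1 \<Longrightarrow>
      (\<integral>\<omega>. ln ((1 - t) * g \<omega> + t * f \<omega>) \<partial>M) \<le> (\<integral>\<omega>. ln (g \<omega>) \<partial>M)"
  shows "(\<integral>\<omega>. f \<omega> / g \<omega> \<partial>M) \<le> 1"
proof -
  define D where "D = C / c"
  have "AE \<omega> in M. c \<le> C" using fb by eventually_elim auto
  then have "1 \<le> D" using \<open>0 < c\<close> by (simp add: D_def)
  have "(\<integral>\<omega>. f \<omega> / g \<omega> \<partial>M) - 1 \<le> 0"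
  proof (rule le_zero_if_le_small_multiples[where \<delta>="1 / (2 * D)" and B="2 * D^2"])
    show "0 < 1 / (2 * D)" using \<open>1 \<le> D\<close> by simp
    fix t :: real assume "0 < t" "t \<le> 1 / (2 * D)"
    then have "t * D \<le> 1/2" using \<open>1 \<le> D\<close> by (simp add: field_simps)
    moreover have "t \<le> t * D" using \<open>0 < t\<close> \<open>1 \<le> D\<close> by simp
    ultimately have "t \<le> 1" by linarith
    have "t * ((\<integral>\<omega>. f \<omega> / g \<omega> \<partial>M) - 1) - 2 * t^2 * D^2 \<le> 0"
      using integral_ln_mixture_ge[OF _ _ \<open>0 < c\<close> fb gb \<open>0 < t\<close> \<open>t \<le> 1\<close>]
        opt[OF \<open>0 < t\<close> \<open>t \<le> 1\<close>] \<open>t * D \<le> 1/2\<close>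
      unfolding D_def by fastforce
    then have "t * ((\<integral>\<omega>. f \<omega> / g \<omega> \<partial>M) - 1) \<le> t * (t * (2 * D^2))"
      by (simp add: power2_eq_square algebra_simps)
    then show "(\<integral>\<omega>. f \<omega> / g \<omega> \<partial>M) - 1 \<le> t * (2 * D^2)"
      using \<open>0 < t\<close> by simp
  qed
  then show ?thesis by simp
qed

lemma (in prob_space) AE_eventually_less_exp:
  fixes R :: "nat \<Rightarrow> 'a \<Rightarrow> real"
  assumes [measurable]: "\<And>n. R n \<in> borel_measurable M"
    and nonneg: "\<And>n. n \<ge> 1 \<Longrightarrow> AE \<omega> in M. 0 \<le> R n \<omega>"
    and int: "\<And>n. n \<ge> 1 \<Longrightarrow> integrable M (R n)"
    and le_one: "\<And>n. n \<ge> 1 \<Longrightarrow> (\<integral>\<omega>. R n \<omega> \<partial>M) \<le> 1"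
    and "0 < e"
  shows "AE \<omega> in M. eventually (\<lambda>n. R n \<omega> < exp (real n * e)) sequentially"
proof -
  define A where "A n = {\<omega> \<in> space M. exp (real n * e) \<le> R n \<omega>}" for n
  have [measurable]: "A n \<in> sets M" for n unfolding A_def by measurable
  have tail_bound: "measure M (A n) \<le> exp (-e) ^ n" if "n \<ge> 1" for n
  proof -
    have "measure M (A n) \<le> (\<integral>\<omega>. R n \<omega> \<partial>M) / exp (real n * e)"
      unfolding A_def using int nonneg that
      by (intro integral_Markov_inequality_measure[OF _ sets.top]) auto
    also have "\<dots> \<le> 1 / exp (real n * e)"
      using le_one that by (intro divide_right_mono) auto
    also have "\<dots> = exp (-e) ^ n"
      by (simp add: exp_minus inverse_eq_divide power_one_over exp_of_nat_mult)
    finally show ?thesis .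
  qed
  have "summable (\<lambda>n. measure M (A n))"
  proof (rule summable_comparison_test)
    show "\<exists>N. \<forall>n\<ge>N. norm (measure M (A n)) \<le> exp (-e) ^ n"
      using tail_bound by auto
    show "summable (\<lambda>n. exp (-e) ^ n)"
      using \<open>0 < e\<close> by (intro summable_geometric) simp
  qed
  then have "AE \<omega> in M. eventually (\<lambda>n. \<omega> \<in> space M - A n) sequentially"
    by (intro borel_cantelli_AE1) (auto simp flip: less_top)
  then show ?thesis
  proof eventually_elim
    case (elim \<omega>)
    then show ?case by (rule eventually_mono) (auto simp: A_def)
  qed
qed

lemma (in prob_space) AE_limsup_ln_le_zero:
  fixes R :: "nat \<Rightarrow> 'a \<Rightarrow> real"
  assumes [measurable]: "\<And>n. R n \<in> borel_measurable M"
    and pos: "\<And>n. n \<ge> 1 \<Longrightarrow> AE \<omega> in M. 0 < R n \<omega>"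
    and int: "\<And>n. n \<ge> 1 \<Longrightarrow> integrable M (R n)"
    and le_one: "\<And>n. n \<ge> 1 \<Longrightarrow> (\<integral>\<omega>. R n \<omega> \<partial>M) \<le> 1"
  shows "AE \<omega> in M. limsup (\<lambda>n. ereal (1 / real n * ln (R n \<omega>))) \<le> 0"
proof -
  have nonneg: "AE \<omega> in M. 0 \<le> R n \<omega>" if "n \<ge> 1" for n
    using pos[OF that] by eventually_elim simp
  have "AE \<omega> in M. eventually (\<lambda>n. R n \<omega> < exp (real n * inverse (real (Suc j)))) sequentially"
    for j :: nat
    by (rule AE_eventually_less_exp[OF assms(1) nonneg int le_one]) simp_all
  then have "AE \<omega> in M. \<forall>j::nat.
      eventually (\<lambda>n. R n \<omega> < exp (real n * inverse (real (Suc j)))) sequentially"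
    by (simp add: AE_all_countable)
  moreover have "AE \<omega> in M. \<forall>n. n \<ge> 1 \<longrightarrow> 0 < R n \<omega>"
    unfolding AE_all_countable by (intro allI AE_impI) (erule pos)
  ultimately show ?thesis
  proof eventually_elim
    case (elim \<omega>)
    show ?case unfolding Limsup_le_iff
    proof (intro allI impI)
      fix y :: ereal assume "0 < y"
      then obtain e where "0 < e" "ereal e < y"
        using ereal_dense2[OF \<open>0 < y\<close>] by (auto simp: zero_ereal_def)
      then obtain j where j: "inverse (real (Suc j)) < e"
        using reals_Archimedean by blast
      have "eventually (\<lambda>n. n \<ge> 1 \<and> R n \<omega> < exp (real n * inverse (real (Suc j)))) sequentially"
        by (intro eventually_conj eventually_ge_at_top) (use elim(1) in blast)
      then show "eventually (\<lambda>n. ereal (1 / real n * ln (R n \<omega>)) < y) sequentially"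
      proof (rule eventually_mono)
        fix n assume n: "n \<ge> 1 \<and> R n \<omega> < exp (real n * inverse (real (Suc j)))"
        then have "ln (R n \<omega>) < ln (exp (real n * inverse (real (Suc j))))"
          using elim(2) by (subst ln_less_cancel_iff) auto
        then have "ln (R n \<omega>) < real n * inverse (real (Suc j))"
          by (simp only: ln_exp)
        then have "1 / real n * ln (R n \<omega>) < inverse (real (Suc j))"
          using n by (simp add: field_simps)
        then have "ereal (1 / real n * ln (R n \<omega>)) < ereal e"
          using j by simp
        then show "ereal (1 / real n * ln (R n \<omega>)) < y"
          using \<open>ereal e < y\<close> by (rule less_trans)
      qed
    qed
  qed
qed

lemma convex_portfolios: "convex portfolios"
  unfolding portfolios_def convex_def
  by (auto simp: sum.distrib simp flip: sum_distrib_left)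

lemma inner_portfolio_bounds:
  fixes K v :: "real ^ 'm"
  assumes "K \<in> portfolios" and v: "\<And>i. lo \<le> v $ i \<and> v $ i \<le> hi"
  shows "lo \<le> K \<bullet> v \<and> K \<bullet> v \<le> hi"
proof -
  have K: "\<And>i. 0 \<le> K $ i" "(\<Sum>i\<in>UNIV. K $ i) = 1"
    using assms(1) by (auto simp: portfolios_def)
  have "(\<Sum>i\<in>UNIV. K $ i * lo) \<le> K \<bullet> v" "K \<bullet> v \<le> (\<Sum>i\<in>UNIV. K $ i * hi)"
    unfolding inner_vec_def using K v by (auto intro!: sum_mono mult_left_mono)
  moreover have "(\<Sum>i\<in>UNIV. K $ i * lo) = lo" "(\<Sum>i\<in>UNIV. K $ i * hi) = hi"
    using K by (simp_all flip: sum_distrib_right)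
  ultimately show ?thesis by simp
qed

lemma one_plus_inner_cumret:
  assumes "K \<in> portfolios"
  shows "1 + K \<bullet> cumret X n \<omega> = K \<bullet> (\<chi> i. \<Prod>k<n. 1 + X k \<omega> $ i)"
  using assms
  by (simp add: portfolios_def inner_vec_def cumret_def right_diff_distrib sum_subtractf)

lemma one_plus_inner_cumret_bounds:
  fixes X :: "nat \<Rightarrow> 'a \<Rightarrow> real ^ 'm"
  assumes "K \<in> portfolios" and "0 \<le> a"
    and ret: "\<And>k i. a \<le> 1 + X k \<omega> $ i \<and> 1 + X k \<omega> $ i \<le> b"
  shows "a ^ n \<le> 1 + K \<bullet> cumret X n \<omega> \<and> 1 + K \<bullet> cumret X n \<omega> \<le> b ^ n"
  unfolding one_plus_inner_cumret[OF assms(1)]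
proof (rule inner_portfolio_bounds[OF assms(1)])
  fix i :: 'm
  have "(\<Prod>k<n. a) \<le> (\<Prod>k<n. 1 + X k \<omega> $ i)"
    by (rule prod_mono) (use ret \<open>0 \<le> a\<close> in auto)
  moreover have "(\<Prod>k<n. 1 + X k \<omega> $ i) \<le> (\<Prod>k<n. b)"
    by (rule prod_mono) (use ret \<open>0 \<le> a\<close> in \<open>auto intro: order_trans\<close>)
  ultimately
  show "a ^ n \<le> (\<chi> i. \<Prod>k<n. 1 + X k \<omega> $ i) $ i \<and> (\<chi> i. \<Prod>k<n. 1 + X k \<omega> $ i) $ i \<le> b ^ n"
    by simp
qed

lemma borel_measurable_inner_cumret[measurable]:
  fixes X :: "nat \<Rightarrow> 'a \<Rightarrow> real ^ 'm"
  assumes [measurable]: "\<And>k. X k \<in> borel_measurable M"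
  shows "(\<lambda>\<omega>. K \<bullet> cumret X n \<omega>) \<in> borel_measurable M"
proof -
  have [measurable]: "(\<lambda>\<omega>. X k \<omega> $ i) \<in> borel_measurable M" for k i
    using measurable_compose[OF assms borel_measurable_nth] by simp
  show ?thesis
    unfolding inner_vec_def cumret_def vec_lambda_beta by measurable
qed

lemma AE_uniform_return_bounds:
  fixes X :: "nat \<Rightarrow> 'a \<Rightarrow> real ^ 'm" and Xmin Xmax :: "real ^ 'm"
  assumes bounds: "\<And>k i. AE \<omega> in M. Xmin $ i \<le> X k \<omega> $ i \<and> X k \<omega> $ i \<le> Xmax $ i"
    and lower: "\<And>i. Xmin $ i > -1"
  obtains a b where "0 < a" "AE \<omega> in M. \<forall>k i. a \<le> 1 + X k \<omega> $ i \<and> 1 + X k \<omega> $ i \<le> b"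
proof
  let ?a = "Min (range (\<lambda>i. 1 + Xmin $ i))" and ?b = "Max (range (\<lambda>i. 1 + Xmax $ i))"
  have "0 < 1 + Xmin $ i" for i
    using lower[of i] by linarith
  then show "0 < ?a" by simp
  have "AE \<omega> in M. \<forall>k i. Xmin $ i \<le> X k \<omega> $ i \<and> X k \<omega> $ i \<le> Xmax $ i"
    using bounds by (simp add: AE_all_countable)
  then show "AE \<omega> in M. \<forall>k i. ?a \<le> 1 + X k \<omega> $ i \<and> 1 + X k \<omega> $ i \<le> ?b"
  proof eventually_elim
    case (elim \<omega>)
    have "?a \<le> 1 + Xmin $ i" "1 + Xmax $ i \<le> ?b" for i by (auto intro: Min_le Max_ge)
    with elim show ?case by (meson add_left_mono order_trans)
  qed
qed

lemma integral_ln_mixture_le_if_growth_optimal: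
  fixes M :: "'a measure" and X :: "nat \<Rightarrow> 'a \<Rightarrow> real ^ 'm"
  assumes "n \<ge> 1" "Kstar \<in> portfolios" "K \<in> portfolios" "0 \<le> t" "t \<le> 1"
    and opt: "\<And>L. L \<in> portfolios \<Longrightarrow> growth M X n L \<le> growth M X n Kstar"
  shows "(\<integral>\<omega>. ln ((1 - t) * (1 + Kstar \<bullet> cumret X n \<omega>) + t * (1 + K \<bullet> cumret X n \<omega>)) \<partial>M)
    \<le> (\<integral>\<omega>. ln (1 + Kstar \<bullet> cumret X n \<omega>) \<partial>M)"
proof -
  have "(1 - t) *\<^sub>R Kstar + t *\<^sub>R K \<in> portfolios"
    using convex_portfolios assms(2-5) by (intro convexD) auto
  then have "growth M X n ((1 - t) *\<^sub>R Kstar + t *\<^sub>R K) \<le> growth M X n Kstar"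
    by (rule opt)
  moreover have "1 + ((1 - t) *\<^sub>R Kstar + t *\<^sub>R K) \<bullet> v = (1 - t) * (1 + Kstar \<bullet> v) + t * (1 + K \<bullet> v)"
    for v :: "real ^ 'm"
    by (simp add: algebra_simps)
  ultimately show ?thesis
    using \<open>n \<ge> 1\<close> by (simp add: growth_def divide_le_cancel)
qed

theorem lemma2:
  fixes M :: "'a measure"
    and X :: "nat \<Rightarrow> 'a \<Rightarrow> real ^ 'm"
    and Xmin Xmax :: "real ^ 'm"
    and Kstar :: "nat \<Rightarrow> real ^ 'm"
  assumes "prob_space M"
    and "CARD('m) \<ge> 2"
    and meas: "\<And>k. X k \<in> borel_measurable M"
    and indep: "prob_space.indep_vars M (\<lambda>_. borel) X UNIV"
    and ident: "\<And>k. distr M borel (X k) = distr M borel (X 0)"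
    and bounds: "\<And>k i. AE \<omega> in M. Xmin $ i \<le> X k \<omega> $ i \<and> X k \<omega> $ i \<le> Xmax $ i"
    and lower: "\<And>i. Xmin $ i > -1"
    and riskless: "\<exists>j r. r \<ge> 0 \<and> (\<forall>k. AE \<omega> in M. X k \<omega> $ j = r)"
    and Kstar_in: "\<And>n. n \<ge> 1 \<Longrightarrow> Kstar n \<in> portfolios"
    and Kstar_opt: "\<And>n K. n \<ge> 1 \<Longrightarrow> K \<in> portfolios \<Longrightarrow> growth M X n K \<le> growth M X n (Kstar n)"
    and K: "K \<in> portfolios"
  shows "AE \<omega> in M. limsup (\<lambda>n. ereal ((1 / real n) *
           ln ((1 + K \<bullet> cumret X n \<omega>) / (1 + Kstar n \<bullet> cumret X n \<omega>)))) \<le> 0"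
proof -
  interpret prob_space M by fact
  note meas[measurable]
  obtain a b where "0 < a"
    and returns: "AE \<omega> in M. \<forall>k i. a \<le> 1 + X k \<omega> $ i \<and> 1 + X k \<omega> $ i \<le> b"
    by (rule AE_uniform_return_bounds[OF bounds lower])
  have wealth: "AE \<omega> in M. a ^ n \<le> 1 + L \<bullet> cumret X n \<omega> \<and> 1 + L \<bullet> cumret X n \<omega> \<le> b ^ n"
    if "L \<in> portfolios" for L n
    using returns
    by eventually_elim (rule one_plus_inner_cumret_bounds[OF that less_imp_le[OF \<open>0 < a\<close>]], blast)
  show ?thesis
  proof (rule AE_limsup_ln_le_zero)
    fix n :: nat assume n: "n \<ge> 1"
    let ?f = "\<lambda>\<omega>. 1 + K \<bullet> cumret X n \<omega>" and ?g = "\<lambda>\<omega>. 1 + Kstar n \<bullet> cumret X n \<omega>"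
    have f: "AE \<omega> in M. a ^ n \<le> ?f \<omega> \<and> ?f \<omega> \<le> b ^ n" by (rule wealth[OF K])
    have g: "AE \<omega> in M. a ^ n \<le> ?g \<omega> \<and> ?g \<omega> \<le> b ^ n" by (rule wealth[OF Kstar_in[OF n]])
    have "0 < a ^ n" using \<open>0 < a\<close> by simp
    show "AE \<omega> in M. 0 < ?f \<omega> / ?g \<omega>"
      using f g by eventually_elim (metis ratio_bounds[OF \<open>0 < a ^ n\<close>])
    show "integrable M (\<lambda>\<omega>. ?f \<omega> / ?g \<omega>)"
      by (rule integrable_ratio_AE_bounded[OF _ _ \<open>0 < a ^ n\<close> f g]) measurable
    show "(\<integral>\<omega>. ?f \<omega> / ?g \<omega> \<partial>M) \<le> 1"
    proof (rule integral_ratio_le_one_if_log_optimal[OF _ _ \<open>0 < a ^ n\<close> f g])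
      fix t :: real assume "0 < t" "t \<le> 1"
      then show "(\<integral>\<omega>. ln ((1 - t) * ?g \<omega> + t * ?f \<omega>) \<partial>M) \<le> (\<integral>\<omega>. ln (?g \<omega>) \<partial>M)"
        by (intro integral_ln_mixture_le_if_growth_optimal[OF n Kstar_in[OF n] K] Kstar_opt[OF n]) auto
    qed measurable
  qed measurable
qed

end
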